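(* Let $\widehat{G}$ be a signed bigraph whose underlying bigraph is non-separable, with bipartition $(X,Y)$ and no isolated vertices, and let $x_1,\dots,x_\alpha,y_1,\dots,y_\beta$ be a canonical ordering of $\widehat{G}$. Suppose there are distinct $x_i,x_j,x_k\in X$ and distinct $y_\ell,y_q,y_r\in Y$ with $x_i,x_j\in N(y_1)$ such that, in the subgraph induced by these six vertices, the edges are exactly $x_iy_\ell,x_iy_q,x_iy_r,x_jy_\ell,x_jy_q,x_jy_r,x_ky_r$ (so $x_ky_\ell,x_ky_q$ are non-edges), where $x_iy_\ell$, $x_iy_q$ and $x_jy_r$ are negative (the others of any sign). If no edge of $\widehat{G}$ is signed simplicial, then $\widehat{G}$ contains a graph in $F_3\cup F_4\cup F_5\cup F_6$ as an induced subgraph, where: $F_3$: complete bigraph with parts $\{a_1,a_2\}$, $\{b_1,\dots,b_4\}$, $a_1b_1,a_1b_2,a_2b_3,a_2b_4$ negative, other four edges free; $F_4$: complete bigraph with parts $\{a_1,a_2,a_3\}$, $\{b_1,b_2,b_3\}$, $a_1b_1,a_2b_2,a_3b_3$ negative, other six edges free; $F_5$: bigraph with parts $\{a_1,a_2,a_3\}$, $\{b_1,b_2,b_3\}$ having all nine possible edges except $a_1b_3$, with $a_2b_1,a_3b_2$ negative and the other six edges free; $F_6$: bigraph with parts $\{a_1,\dots,a_4\}$, $\{b_1,\dots,b_4\}$ in which $a_1,a_2$ are adjacent exactly to $b_1,b_2$ and $a_3,a_4$ to all of $b_1,\dots,b_4$, with $a_1b_1,a_2b_1,a_3b_2,a_4b_3,a_4b_4$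 negative and the other seven edges free.
   Context: A signed graph is a finite simple graph each of whose edges is assigned a sign, positive or negative. A signed bigraph is a signed graph whose underlying graph is bipartite. A bigraph is non-separable if it contains no induced $2K_2$. An induced subgraph is obtained by deleting vertices only; $\widehat G$ contains $H$ as an induced subgraph if some induced subgraph is isomorphic to $H$ via a sign-preserving isomorphism. In a bigraph with bipartition $(X,Y)$, a subgraph $H$ is a biclique if every vertex of $V(H)\cap X$ is adjacent to every vertex of $V(H)\cap Y$. For an edge $uv$, $N(uv)=(N(u)\cup N(v))\setminus\{u,v\}$; $uv$ is signed simplicial if $N(uv)$ induces a biclique all of whose edges are positive. A canonical ordering of a non-separable bigraph with $X=\{x_1,\dots,x_\alpha\}$, $Y=\{y_1,\dots,y_\beta\}$ is an ordering with $N(x_1)\supseteq\cdots\supseteq N(x_\alpha)$ and $N(y_1)\subseteq\cdots\subseteq N(y_\beta)$. A family described by a graph with some edges declared negative and the rest declared free is the set of all signed graphs obtained by giving each free edge an arbitrary sign. *)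

theory Defs
  imports Main
begin

text \<open>A signed bigraph: bipartition (X,Y) (vertex set X \<union> Y), a symmetric adjacency
relation E whose edges all go between X and Y, and a symmetric relation neg marking the
negative edges (every other edge is positive).\<close>

definition signed_bigraph ::
  "'v set \<Rightarrow> 'v set \<Rightarrow> ('v \<Rightarrow> 'v \<Rightarrow> bool) \<Rightarrow> ('v \<Rightarrow> 'v \<Rightarrow> bool) \<Rightarrow> bool" where
  "signed_bigraph X Y E neg \<longleftrightarrow>
     finite X \<and> finite Y \<and> X \<inter> Y = {} \<and>
     (\<forall>u v. E u v \<longrightarrow> E v u) \<and>
     (\<forall>u v. E u v \<longrightarrow> (u \<in> X \<and> v \<in> Y) \<or> (u \<in> Y \<and> v \<in> X)) \<and>
     (\<forall>u v. neg u v \<longrightarrow> neg v u) \<and>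
     (\<forall>u v. neg u v \<longrightarrow> E u v)"

definition nbhd :: "('v \<Rightarrow> 'v \<Rightarrow> bool) \<Rightarrow> 'v \<Rightarrow> 'v set" where
  "nbhd E v = {u. E v u}"

definition non_separable :: "'v set \<Rightarrow> 'v set \<Rightarrow> ('v \<Rightarrow> 'v \<Rightarrow> bool) \<Rightarrow> bool" where
  "non_separable X Y E \<longleftrightarrow>
     \<not> (\<exists>x1\<in>X. \<exists>x2\<in>X. \<exists>y1\<in>Y. \<exists>y2\<in>Y. x1 \<noteq> x2 \<and> y1 \<noteq> y2 \<and>
          E x1 y1 \<and> E x2 y2 \<and> \<not> E x1 y2 \<and> \<not> E x2 y1)"

definition no_isolated :: "'v set \<Rightarrow> 'v set \<Rightarrow> ('v \<Rightarrow> 'v \<Rightarrow> bool) \<Rightarrow> bool" where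
  "no_isolated X Y E \<longleftrightarrow> (\<forall>v \<in> X \<union> Y. \<exists>u. E v u)"

text \<open>Canonical ordering: xs = [x_1,...,x_alpha], ys = [y_1,...,y_beta].\<close>
definition canonical_ordering ::
  "'v set \<Rightarrow> 'v set \<Rightarrow> ('v \<Rightarrow> 'v \<Rightarrow> bool) \<Rightarrow> 'v list \<Rightarrow> 'v list \<Rightarrow> bool" where
  "canonical_ordering X Y E xs ys \<longleftrightarrow>
     distinct xs \<and> set xs = X \<and> distinct ys \<and> set ys = Y \<and>
     (\<forall>i. Suc i < length xs \<longrightarrow> nbhd E (xs ! Suc i) \<subseteq> nbhd E (xs ! i)) \<and>
     (\<forall>i. Suc i < length ys \<longrightarrow> nbhd E (ys ! i) \<subseteq> nbhd E (ys ! Suc i))"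

definition edge_nbhd :: "('v \<Rightarrow> 'v \<Rightarrow> bool) \<Rightarrow> 'v \<Rightarrow> 'v \<Rightarrow> 'v set" where
  "edge_nbhd E u v = (nbhd E u \<union> nbhd E v) - {u, v}"

definition signed_simplicial ::
  "'v set \<Rightarrow> 'v set \<Rightarrow> ('v \<Rightarrow> 'v \<Rightarrow> bool) \<Rightarrow> ('v \<Rightarrow> 'v \<Rightarrow> bool) \<Rightarrow> 'v \<Rightarrow> 'v \<Rightarrow> bool" where
  "signed_simplicial X Y E neg u v \<longleftrightarrow>
     (\<forall>a \<in> edge_nbhd E u v \<inter> X. \<forall>b \<in> edge_nbhd E u v \<inter> Y. E a b \<and> \<not> neg a b)"

text \<open>The signed graph contains, as an induced subgraph, some member of the family given by a
bigraph pattern with parts {a_1..a_p}, {b_1..b_q}, edge set PE (pairs (i,j) meaning a_i b_j),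
negative edges PN (a subset of PE) and all remaining edges free.  Since free edges may receive
any sign, this amounts to an injective vertex map that preserves adjacency and non-adjacency
exactly and sends the declared negative edges to negative edges.\<close>
definition contains_family ::
  "'v set \<Rightarrow> ('v \<Rightarrow> 'v \<Rightarrow> bool) \<Rightarrow> ('v \<Rightarrow> 'v \<Rightarrow> bool) \<Rightarrow> nat \<Rightarrow> nat \<Rightarrow>
   (nat \<Rightarrow> nat \<Rightarrow> bool) \<Rightarrow> (nat \<Rightarrow> nat \<Rightarrow> bool) \<Rightarrow> bool" where
  "contains_family V E neg p q PE PN \<longleftrightarrow>
     (\<exists>a b. inj_on a {1..p} \<and> inj_on b {1..q} \<and> a ` {1..p} \<inter> b ` {1..q} = {} \<and>
        a ` {1..p} \<subseteq> V \<and> b ` {1..q} \<subseteq> V \<and>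
        (\<forall>i\<in>{1..p}. \<forall>i'\<in>{1..p}. \<not> E (a i) (a i')) \<and>
        (\<forall>j\<in>{1..q}. \<forall>j'\<in>{1..q}. \<not> E (b j) (b j')) \<and>
        (\<forall>i\<in>{1..p}. \<forall>j\<in>{1..q}. (E (a i) (b j) \<longleftrightarrow> PE i j) \<and> (PN i j \<longrightarrow> neg (a i) (b j))))"

definition F3_E :: "nat \<Rightarrow> nat \<Rightarrow> bool" where "F3_E i j = True"
definition F3_N :: "nat \<Rightarrow> nat \<Rightarrow> bool" where
  "F3_N i j \<longleftrightarrow> (i, j) \<in> {(1,1), (1,2), (2,3), (2,4)}"

definition F4_E :: "nat \<Rightarrow> nat \<Rightarrow> bool" where "F4_E i j = True"
definition F4_N :: "nat \<Rightarrow> nat \<Rightarrow> bool" where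
  "F4_N i j \<longleftrightarrow> (i, j) \<in> {(1,1), (2,2), (3,3)}"

definition F5_E :: "nat \<Rightarrow> nat \<Rightarrow> bool" where "F5_E i j \<longleftrightarrow> (i, j) \<noteq> (1, 3)"
definition F5_N :: "nat \<Rightarrow> nat \<Rightarrow> bool" where
  "F5_N i j \<longleftrightarrow> (i, j) \<in> {(2,1), (3,2)}"

definition F6_E :: "nat \<Rightarrow> nat \<Rightarrow> bool" where
  "F6_E i j \<longleftrightarrow> (i \<in> {1,2} \<and> j \<in> {1,2}) \<or> i \<in> {3,4}"
definition F6_N :: "nat \<Rightarrow> nat \<Rightarrow> bool" where
  "F6_N i j \<longleftrightarrow> (i, j) \<in> {(1,1), (2,1), (3,2), (4,3), (4,4)}"

end

theory Submission imports Defs begin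

text \<open>Since y_1 has the smallest neighbourhood in Y, the vertices x_i and x_j are adjacent to
all of Y.  Non-separability makes the neighbourhoods of the vertices of X a chain, so some
neighbour x_0 of y_r has the least neighbourhood among the neighbours of y_r; it misses y_l and
y_q because x_k does.  As x_0 y_r is not signed simplicial, some neighbour x_1 of y_r is joined
negatively to a neighbour y_1 \<noteq> y_r of x_0.  How x_1 meets x_i, x_j, y_l, y_q exhibits a member
of F_3, F_4 or F_5, unless x_1 is a twin of x_0.  Then x_1 is least as well, and a second round
gives a twin x_2 with a negative edge x_2 y_2, which yields F_6 if y_2 = y_1 and F_4 otherwise.\<close>

lemma signed_bigraph_sym:
  "signed_bigraph X Y E neg \<Longrightarrow> E u v \<Longrightarrow> E v u"
  unfolding signed_bigraph_def by blast

lemma signed_bigraph_edge_X: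
  "signed_bigraph X Y E neg \<Longrightarrow> E x y \<Longrightarrow> x \<in> X \<Longrightarrow> y \<in> Y"
  unfolding signed_bigraph_def by blast

lemma signed_bigraph_no_edge_X:
  "signed_bigraph X Y E neg \<Longrightarrow> x \<in> X \<Longrightarrow> x' \<in> X \<Longrightarrow> \<not> E x x'"
  unfolding signed_bigraph_def by blast

lemma signed_bigraph_no_edge_Y:
  "signed_bigraph X Y E neg \<Longrightarrow> y \<in> Y \<Longrightarrow> y' \<in> Y \<Longrightarrow> \<not> E y y'"
  unfolding signed_bigraph_def by blast

lemma contains_familyI:
  assumes G: "signed_bigraph X Y E neg"
    and "inj_on a {1..p}" "inj_on b {1..q}"
    and "\<And>i. i \<in> {1..p} \<Longrightarrow> a i \<in> X" "\<And>j. j \<in> {1..q} \<Longrightarrow> b j \<in> Y"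
    and "\<And>i j. i \<in> {1..p} \<Longrightarrow> j \<in> {1..q} \<Longrightarrow> E (a i) (b j) \<longleftrightarrow> PE i j"
    and "\<And>i j. i \<in> {1..p} \<Longrightarrow> j \<in> {1..q} \<Longrightarrow> PN i j \<Longrightarrow> neg (a i) (b j)"
  shows "contains_family (X \<union> Y) E neg p q PE PN"
proof -
  have "a ` {1..p} \<subseteq> X" "b ` {1..q} \<subseteq> Y"
    using assms(4,5) by auto
  moreover have "X \<inter> Y = {}"
    using G unfolding signed_bigraph_def by blast
  ultimately have "a ` {1..p} \<inter> b ` {1..q} = {}" "a ` {1..p} \<subseteq> X \<union> Y" "b ` {1..q} \<subseteq> X \<union> Y"
    by blast+
  moreover have "\<forall>i\<in>{1..p}. \<forall>i'\<in>{1..p}. \<not> E (a i) (a i')"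
    using signed_bigraph_no_edge_X[OF G] assms(4) by simp
  moreover have "\<forall>j\<in>{1..q}. \<forall>j'\<in>{1..q}. \<not> E (b j) (b j')"
    using signed_bigraph_no_edge_Y[OF G] assms(5) by simp
  moreover have "\<forall>i\<in>{1..p}. \<forall>j\<in>{1..q}. (E (a i) (b j) \<longleftrightarrow> PE i j) \<and> (PN i j \<longrightarrow> neg (a i) (b j))"
    using assms(6,7) by simp
  ultimately show ?thesis
    unfolding contains_family_def using assms(2,3) by - (rule exI[of _ a], rule exI[of _ b], simp)
qed

lemma contains_F3I:
  assumes "signed_bigraph X Y E neg"
    and "xa \<in> X" "xb \<in> X" "ya \<in> Y" "yb \<in> Y" "yc \<in> Y" "yd \<in> Y"
    and "xa \<noteq> xb" "ya \<noteq> yb" "ya \<noteq> yc" "ya \<noteq> yd" "yb \<noteq> yc" "yb \<noteq> yd" "yc \<noteq> yd"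
    and "E xa ya" "E xa yb" "E xa yc" "E xa yd" "E xb ya" "E xb yb" "E xb yc" "E xb yd"
    and "neg xa ya" "neg xa yb" "neg xb yc" "neg xb yd"
  shows "contains_family (X \<union> Y) E neg 2 4 F3_E F3_N"
proof -
  have intervals: "{1..2::nat} = {1,2}" "{1..4::nat} = {1,2,3,4}"
    by auto
  show ?thesis
    by (rule contains_familyI[OF assms(1), where
        a = "\<lambda>i. if i = 1 then xa else xb" and
        b = "\<lambda>j. if j = 1 then ya else if j = 2 then yb else if j = 3 then yc else yd"])
      (use assms intervals in \<open>auto simp: F3_E_def F3_N_def inj_on_def\<close>)
qed

lemma contains_F4I:
  assumes "signed_bigraph X Y E neg"
    and "xa \<in> X" "xb \<in> X" "xc \<in> X" "ya \<in> Y" "yb \<in> Y" "yc \<in> Y"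
    and "xa \<noteq> xb" "xa \<noteq> xc" "xb \<noteq> xc" "ya \<noteq> yb" "ya \<noteq> yc" "yb \<noteq> yc"
    and "E xa ya" "E xa yb" "E xa yc" "E xb ya" "E xb yb" "E xb yc" "E xc ya" "E xc yb" "E xc yc"
    and "neg xa ya" "neg xb yb" "neg xc yc"
  shows "contains_family (X \<union> Y) E neg 3 3 F4_E F4_N"
proof -
  have intervals: "{1..3::nat} = {1,2,3}"
    by auto
  show ?thesis
    by (rule contains_familyI[OF assms(1), where
        a = "\<lambda>i. if i = 1 then xa else if i = 2 then xb else xc" and
        b = "\<lambda>j. if j = 1 then ya else if j = 2 then yb else yc"])
      (use assms intervals in \<open>auto simp: F4_E_def F4_N_def inj_on_def\<close>)
qed

lemma contains_F5I:
  assumes "signed_bigraph X Y E neg"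
    and "xa \<in> X" "xb \<in> X" "xc \<in> X" "ya \<in> Y" "yb \<in> Y" "yc \<in> Y"
    and "xa \<noteq> xb" "xa \<noteq> xc" "xb \<noteq> xc" "ya \<noteq> yb" "ya \<noteq> yc" "yb \<noteq> yc"
    and "E xa ya" "E xa yb" "\<not> E xa yc" "E xb ya" "E xb yb" "E xb yc" "E xc ya" "E xc yb" "E xc yc"
    and "neg xb ya" "neg xc yb"
  shows "contains_family (X \<union> Y) E neg 3 3 F5_E F5_N"
proof -
  have intervals: "{1..3::nat} = {1,2,3}"
    by auto
  show ?thesis
    by (rule contains_familyI[OF assms(1), where
        a = "\<lambda>i. if i = 1 then xa else if i = 2 then xb else xc" and
        b = "\<lambda>j. if j = 1 then ya else if j = 2 then yb else yc"])
      (use assms intervals in \<open>auto simp: F5_E_def F5_N_def inj_on_def\<close>)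
qed

lemma contains_F6I:
  assumes "signed_bigraph X Y E neg"
    and "xa \<in> X" "xb \<in> X" "xc \<in> X" "xd \<in> X" "ya \<in> Y" "yb \<in> Y" "yc \<in> Y" "yd \<in> Y"
    and "xa \<noteq> xb" "xa \<noteq> xc" "xa \<noteq> xd" "xb \<noteq> xc" "xb \<noteq> xd" "xc \<noteq> xd"
    and "ya \<noteq> yb" "ya \<noteq> yc" "ya \<noteq> yd" "yb \<noteq> yc" "yb \<noteq> yd" "yc \<noteq> yd"
    and "E xa ya" "E xa yb" "\<not> E xa yc" "\<not> E xa yd"
    and "E xb ya" "E xb yb" "\<not> E xb yc" "\<not> E xb yd"
    and "E xc ya" "E xc yb" "E xc yc" "E xc yd"
    and "E xd ya" "E xd yb" "E xd yc" "E xd yd"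
    and "neg xa ya" "neg xb ya" "neg xc yb" "neg xd yc" "neg xd yd"
  shows "contains_family (X \<union> Y) E neg 4 4 F6_E F6_N"
proof -
  have intervals: "{1..4::nat} = {1,2,3,4}"
    by auto
  show ?thesis
    by (rule contains_familyI[OF assms(1), where
        a = "\<lambda>i. if i = 1 then xa else if i = 2 then xb else if i = 3 then xc else xd" and
        b = "\<lambda>j. if j = 1 then ya else if j = 2 then yb else if j = 3 then yc else yd"])
      (use assms intervals in \<open>auto simp: F6_E_def F6_N_def inj_on_def\<close>)
qed

lemma non_separable_nbhd_chain:
  assumes G: "signed_bigraph X Y E neg" and nonsep: "non_separable X Y E"
    and "x \<in> X" "x' \<in> X"
  shows "nbhd E x \<subseteq> nbhd E x' \<or> nbhd E x' \<subseteq> nbhd E x"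
proof (rule ccontr)
  assume "\<not> ?thesis"
  then obtain y y' where yy': "E x y" "\<not> E x' y" "E x' y'" "\<not> E x y'"
    by (auto simp: nbhd_def)
  then have "x \<noteq> x'" "y \<noteq> y'" "y \<in> Y" "y' \<in> Y"
    using signed_bigraph_edge_X[OF G] assms(3,4) by auto
  then show False
    using nonsep yy' assms(3,4) unfolding non_separable_def by blast
qed

definition least_nbhd_neighbour :: "'v set \<Rightarrow> ('v \<Rightarrow> 'v \<Rightarrow> bool) \<Rightarrow> 'v \<Rightarrow> 'v \<Rightarrow> bool" where
  "least_nbhd_neighbour X E y x \<longleftrightarrow>
     x \<in> X \<and> E x y \<and> (\<forall>z\<in>X. E z y \<longrightarrow> nbhd E x \<subseteq> nbhd E z)"

lemma non_separable_least_nbhd_neighbour: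
  assumes G: "signed_bigraph X Y E neg" and nonsep: "non_separable X Y E"
    and "x \<in> X" "E x y"
  obtains x0 where "least_nbhd_neighbour X E y x0"
proof -
  let ?Ns = "nbhd E ` {z \<in> X. E z y}"
  have "finite ?Ns" "?Ns \<noteq> {}"
    using G assms(3,4) unfolding signed_bigraph_def by auto
  then obtain N where "N \<in> ?Ns" and minimal: "\<forall>N' \<in> ?Ns. N' \<subseteq> N \<longrightarrow> N = N'"
    by (meson finite_has_minimal)
  then obtain x0 where x0: "x0 \<in> X" "E x0 y" "N = nbhd E x0"
    by blast
  have "nbhd E x0 \<subseteq> nbhd E z" if "z \<in> X" "E z y" for z
    using non_separable_nbhd_chain[OF G nonsep x0(1) that(1)] minimal x0(3) that by blast
  with x0 show ?thesis
    using that unfolding least_nbhd_neighbour_def by blast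
qed

lemma least_nbhd_neighbour_negative_edge:
  assumes G: "signed_bigraph X Y E neg" and "y \<in> Y"
    and least: "least_nbhd_neighbour X E y x0"
    and not_simplicial: "\<not> signed_simplicial X Y E neg x0 y"
  obtains x1 y1 where "x1 \<in> X" "E x1 y" "x1 \<noteq> x0" "E x0 y1" "y1 \<noteq> y" "neg x1 y1"
proof -
  have x0: "x0 \<in> X" "\<And>z. z \<in> X \<Longrightarrow> E z y \<Longrightarrow> nbhd E x0 \<subseteq> nbhd E z"
    using least unfolding least_nbhd_neighbour_def by auto
  obtain a b where a: "a \<in> edge_nbhd E x0 y" "a \<in> X" and b: "b \<in> edge_nbhd E x0 y" "b \<in> Y"
    and not_positive: "\<not> (E a b \<and> \<not> neg a b)"
    using not_simplicial unfolding signed_simplicial_def by blast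
  have "a \<notin> nbhd E x0" "b \<notin> nbhd E y"
    using signed_bigraph_no_edge_X[OF G x0(1) a(2)] signed_bigraph_no_edge_Y[OF G \<open>y \<in> Y\<close> b(2)]
    by (auto simp: nbhd_def)
  then have "E a y" "a \<noteq> x0" "E x0 b" "b \<noteq> y"
    using a(1) b(1) signed_bigraph_sym[OF G] unfolding edge_nbhd_def nbhd_def by auto
  moreover from this have "neg a b"
    using x0(2)[OF a(2)] not_positive by (auto simp: nbhd_def)
  ultimately show ?thesis
    using that a(2) by blast
qed

lemma canonical_ordering_first_nbhd_subset:
  assumes canon: "canonical_ordering X Y E xs ys" and "y \<in> Y"
  shows "nbhd E (ys ! 0) \<subseteq> nbhd E y"
proof -
  have "nbhd E (ys ! 0) \<subseteq> nbhd E (ys ! n)" if "n < length ys" for n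
    using that
  proof (induction n)
    case (Suc n)
    then show ?case
      using canon unfolding canonical_ordering_def by (meson Suc_lessD subset_trans)
  qed simp
  moreover obtain n where "n < length ys" "ys ! n = y"
    using canon \<open>y \<in> Y\<close> unfolding canonical_ordering_def by (auto simp: in_set_conv_nth)
  ultimately show ?thesis
    by blast
qed

definition contains_F3_to_F6 :: "'v set \<Rightarrow> ('v \<Rightarrow> 'v \<Rightarrow> bool) \<Rightarrow> ('v \<Rightarrow> 'v \<Rightarrow> bool) \<Rightarrow> bool" where
  "contains_F3_to_F6 V E neg \<longleftrightarrow>
     contains_family V E neg 2 4 F3_E F3_N \<or> contains_family V E neg 3 3 F4_E F4_N \<or>
     contains_family V E neg 3 3 F5_E F5_N \<or> contains_family V E neg 4 4 F6_E F6_N"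

locale universal_pair =
  fixes X Y :: "'v set" and E neg :: "'v \<Rightarrow> 'v \<Rightarrow> bool" and xi xj yl yq yr :: 'v
  assumes signed: "signed_bigraph X Y E neg"
    and xi_X: "xi \<in> X" and xj_X: "xj \<in> X" and xi_neq_xj: "xi \<noteq> xj"
    and y_in_Y: "yl \<in> Y" "yq \<in> Y" "yr \<in> Y"
    and y_distinct: "yl \<noteq> yq" "yl \<noteq> yr" "yq \<noteq> yr"
    and universal: "\<And>y. y \<in> Y \<Longrightarrow> E xi y" "\<And>y. y \<in> Y \<Longrightarrow> E xj y"
    and negative: "neg xi yl" "neg xi yq" "neg xj yr"
begin

lemma witness_cases:
  assumes x0: "x0 \<in> X" "E x0 yr" "\<not> E x0 yl" "\<not> E x0 yq"
    and x1: "x1 \<in> X" "E x1 yr" "x1 \<noteq> x0" "nbhd E x0 \<subseteq> nbhd E x1"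
    and y1: "E x0 y1" "y1 \<noteq> yr" "neg x1 y1"
  shows "contains_F3_to_F6 (X \<union> Y) E neg \<or> \<not> E x1 yl \<and> \<not> E x1 yq \<and> nbhd E x1 = nbhd E x0"
proof -
  have y1_Y: "y1 \<in> Y"
    using signed_bigraph_edge_X[OF signed y1(1) x0(1)] .
  have "E x1 y1"
    using x1(4) y1(1) by (auto simp: nbhd_def)
  have "y1 \<noteq> yl" "y1 \<noteq> yq" "x0 \<noteq> xi" "x0 \<noteq> xj"
    using x0 y1(1) universal y_in_Y by auto
  note facts = signed xi_X xj_X xi_neq_xj y_in_Y y_distinct negative universal[OF y1_Y]
    universal[OF y_in_Y(1)] universal[OF y_in_Y(2)] universal[OF y_in_Y(3)]
    x0 x1 y1 y1_Y \<open>E x1 y1\<close> \<open>y1 \<noteq> yl\<close> \<open>y1 \<noteq> yq\<close> \<open>x0 \<noteq> xi\<close> \<open>x0 \<noteq> xj\<close>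
  consider (xj) "x1 = xj" | (xi) "x1 = xi"
    | (both) "x1 \<noteq> xi" "x1 \<noteq> xj" "E x1 yl" "E x1 yq"
    | (only_yl) "x1 \<noteq> xi" "x1 \<noteq> xj" "E x1 yl" "\<not> E x1 yq"
    | (only_yq) "x1 \<noteq> xi" "x1 \<noteq> xj" "\<not> E x1 yl" "E x1 yq"
    | (larger) "\<not> E x1 yl" "\<not> E x1 yq" "nbhd E x1 \<noteq> nbhd E x0"
    | (twin) "\<not> E x1 yl" "\<not> E x1 yq" "nbhd E x1 = nbhd E x0"
    by blast
  then show ?thesis
  proof cases
    case xj
    then show ?thesis
      using contains_F3I[of X Y E neg xi xj yl yq yr y1] facts
      by (auto simp: contains_F3_to_F6_def)
  next
    case xi
    then show ?thesis
      using contains_F5I[of X Y E neg x0 xj xi yr y1 yl] facts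
      by (auto simp: contains_F3_to_F6_def)
  next
    case both
    then show ?thesis
      using contains_F4I[of X Y E neg xi xj x1 yl yr y1] facts
      by (auto simp: contains_F3_to_F6_def)
  next
    case only_yl
    then show ?thesis
      using contains_F5I[of X Y E neg x1 xj xi yr yl yq] facts
      by (auto simp: contains_F3_to_F6_def)
  next
    case only_yq
    then show ?thesis
      using contains_F5I[of X Y E neg x1 xj xi yr yq yl] facts
      by (auto simp: contains_F3_to_F6_def)
  next
    case larger
    then obtain w where "E x1 w" "\<not> E x0 w"
      using x1(4) by (auto simp: nbhd_def)
    moreover from this have "w \<in> Y" "w \<noteq> yr" "w \<noteq> y1" "x1 \<noteq> xj"
      using signed_bigraph_edge_X[OF signed _ x1(1)] x0 y1 larger(1) universal(2)[OF y_in_Y(1)]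
      by auto
    ultimately show ?thesis
      using contains_F5I[of X Y E neg x0 xj x1 yr y1 w] facts universal(2)
      by (auto simp: contains_F3_to_F6_def)
  next
    case twin
    then show ?thesis
      by blast
  qed
qed

lemma twin_witnesses:
  assumes x1: "x1 \<in> X" "E x1 yr" "\<not> E x1 yl" "\<not> E x1 yq"
    and x2: "x2 \<in> X" "x2 \<noteq> x1" "nbhd E x2 = nbhd E x1"
    and y12: "E x1 y1" "E x1 y2" "y1 \<noteq> yr" "y2 \<noteq> yr"
    and "neg x1 y1" "neg x2 y2"
  shows "contains_F3_to_F6 (X \<union> Y) E neg"
proof -
  have x2_edges: "E x2 yr" "E x2 y1" "E x2 y2" "\<not> E x2 yl" "\<not> E x2 yq"
    using x1 x2(3) y12 by (auto simp: nbhd_def)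
  have y12_Y: "y1 \<in> Y" "y2 \<in> Y"
    using signed_bigraph_edge_X[OF signed _ x1(1)] y12 by auto
  have distinct: "x1 \<noteq> xi" "x1 \<noteq> xj" "x2 \<noteq> xi" "x2 \<noteq> xj" "y1 \<noteq> yl" "y1 \<noteq> yq"
    using x1 x2_edges y12(1) universal y_in_Y by auto
  note facts = signed xi_X xj_X xi_neq_xj y_in_Y y_distinct negative
    universal[OF y12_Y(1)] universal[OF y12_Y(2)] universal[OF y_in_Y(1)]
    universal[OF y_in_Y(2)] universal[OF y_in_Y(3)] x2_edges y12_Y distinct assms
  show ?thesis
  proof (cases "y2 = y1")
    case True
    then show ?thesis
      using contains_F6I[of X Y E neg x1 x2 xj xi y1 yr yl yq] facts
      by (auto simp: contains_F3_to_F6_def)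
  next
    case False
    then show ?thesis
      using contains_F4I[of X Y E neg x1 x2 xj y1 y2 yr] facts
      by (auto simp: contains_F3_to_F6_def)
  qed
qed

lemma least_nbhd_neighbour_step:
  assumes least: "least_nbhd_neighbour X E yr x0" and "\<not> E x0 yl" "\<not> E x0 yq"
    and not_simplicial: "\<not> signed_simplicial X Y E neg x0 yr"
  obtains (family) "contains_F3_to_F6 (X \<union> Y) E neg"
    | (twin) x1 y1 where "least_nbhd_neighbour X E yr x1" "x1 \<noteq> x0" "nbhd E x1 = nbhd E x0"
        "\<not> E x1 yl" "\<not> E x1 yq" "E x0 y1" "y1 \<noteq> yr" "neg x1 y1"
proof -
  obtain x1 y1 where x1: "x1 \<in> X" "E x1 yr" "x1 \<noteq> x0" and y1: "E x0 y1" "y1 \<noteq> yr" "neg x1 y1"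
    using least_nbhd_neighbour_negative_edge[OF signed y_in_Y(3) least not_simplicial] .
  have x0: "x0 \<in> X" "E x0 yr" "nbhd E x0 \<subseteq> nbhd E x1"
    using least x1 unfolding least_nbhd_neighbour_def by auto
  consider "contains_F3_to_F6 (X \<union> Y) E neg"
    | "\<not> E x1 yl" "\<not> E x1 yq" "nbhd E x1 = nbhd E x0"
    using witness_cases[OF x0(1,2) assms(2,3) x1 x0(3) y1] by blast
  then show ?thesis
  proof cases
    case 2
    moreover from this have "least_nbhd_neighbour X E yr x1"
      using least x1 unfolding least_nbhd_neighbour_def by simp
    ultimately show ?thesis
      using that(2) x1(3) y1 by blast
  qed (use that(1) in blast)
qed

end

theorem lemma3p4:
  fixes X Y :: "'v set" and E neg :: "'v \<Rightarrow> 'v \<Rightarrow> bool"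
    and xs ys :: "'v list" and xi xj xk yl yq yr :: 'v
  assumes G: "signed_bigraph X Y E neg"
    and nonsep: "non_separable X Y E"
    and noiso: "no_isolated X Y E"
    and canon: "canonical_ordering X Y E xs ys"
    and xX: "xi \<in> X" "xj \<in> X" "xk \<in> X"
    and xdist: "xi \<noteq> xj" "xi \<noteq> xk" "xj \<noteq> xk"
    and yY: "yl \<in> Y" "yq \<in> Y" "yr \<in> Y"
    and ydist: "yl \<noteq> yq" "yl \<noteq> yr" "yq \<noteq> yr"
    and y1: "xi \<in> nbhd E (ys ! 0)" "xj \<in> nbhd E (ys ! 0)"
    and edges: "E xi yl" "E xi yq" "E xi yr" "E xj yl" "E xj yq" "E xj yr" "E xk yr"
    and nonedges: "\<not> E xk yl" "\<not> E xk yq"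
    and negs: "neg xi yl" "neg xi yq" "neg xj yr"
    and nosimp: "\<forall>u v. E u v \<longrightarrow> \<not> signed_simplicial X Y E neg u v"
  shows "contains_family (X \<union> Y) E neg 2 4 F3_E F3_N \<or>
         contains_family (X \<union> Y) E neg 3 3 F4_E F4_N \<or>
         contains_family (X \<union> Y) E neg 3 3 F5_E F5_N \<or>
         contains_family (X \<union> Y) E neg 4 4 F6_E F6_N"
proof -
  have "E xi y" "E xj y" if "y \<in> Y" for y
    using canonical_ordering_first_nbhd_subset[OF canon that] y1 signed_bigraph_sym[OF G]
    by (auto simp: nbhd_def)
  then interpret universal_pair X Y E neg xi xj yl yq yr
    using G xX xdist yY ydist negs by unfold_locales auto
  have not_simplicial: "\<not> signed_simplicial X Y E neg x yr"
    and misses: "\<not> E x yl" "\<not> E x yq" if "least_nbhd_neighbour X E yr x" for x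
    using that nosimp xX(3) edges(7) nonedges unfolding least_nbhd_neighbour_def nbhd_def by blast+
  obtain x0 where least0: "least_nbhd_neighbour X E yr x0"
    using non_separable_least_nbhd_neighbour[OF G nonsep xX(3) edges(7)] .
  have "contains_F3_to_F6 (X \<union> Y) E neg"
    using least0 misses[OF least0] not_simplicial[OF least0]
  proof (cases rule: least_nbhd_neighbour_step)
    case (twin x1 y1)
    note first = this
    show ?thesis
      using first(1) misses[OF first(1)] not_simplicial[OF first(1)]
    proof (cases rule: least_nbhd_neighbour_step)
      case (twin x2 y2)
      then show ?thesis
        using twin_witnesses[of x1 x2 y1 y2] first
        unfolding least_nbhd_neighbour_def nbhd_def by auto
    qed
  qed
  then show ?thesis
    unfolding contains_F3_to_F6_def .
qed

end
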